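(* There exists a two-way optical interference automaton (2OIA) that recognizes the language $\{a^nb^{n^2}\mid n\in\mathbb{N}\}$ in $O(|w|^3)$ time, where $|w|$ is the length of the input $w$.
   Context: A two-way optical interference automaton (2OIA) is a deterministic machine with finite state set $Q$, start state $q_0$, accepting and rejecting states, finite input alphabet $\Sigma$, and tape alphabet $\Gamma=\Sigma\cup\{\text{¢},\$\}$. On input $w=w_1\cdots w_n$ the read-only tape holds ¢$w_1\cdots w_n\$$ in cells $0,1,\dots,n+1$, scanned by a two-way head. For each cell $m$ there is a monochromatic point light source at the point $(m,0)$ of the plane; all sources have the same wavelength $\lambda$ and the same initial amplitude $A_0$, and each source is at any moment either switched off or switched on with initial phase $0$ or $\pi$. A detector is located at a grid point $(j,k)$ with $j,k\in\{0,\tfrac12,1,\tfrac32,\dots,n+1\}$, pointing towards the source array; its field of vision is the cone making angle $\pi/4$ with the vertical line through it, so it sees exactly the sources at $(m,0)$ with $|m-j|\le k$. The resultant wave at the detector is $\sum A_0 r_m^{-1}e^{i(\phi_m+2\pi r_m/\lambda)}$, summed over the switched-on sources it sees, where $r_m$ is the distance from the source to the detector and $\phi_m\in\{0,\pi\}$ the source's phase; the detector outputs $\underline{1}$ if this resultant is nonzero and $\underline{0}$ otherwise. The transition function $\delta:Q\times\Gamma\times\{\underline0,\underline1\}\to Q\times\{\text{left},\text{right},\text{stay}\}\times\{\text{left},\text{right},\text{up},\text{down},\text{stay}\}\times\{\mathrm{toggle}(0),\mathrm{toggle}(\pi),-\}$ maps (state, scanned symbol, detector output) to a new state, a move of the head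 by one cell, a move of the detector by one grid step (of length $1/2$), and an action on the source of the currently scanned cell: $\mathrm{toggle}(\phi)$ switches it on with phase $\phi$ if it is off and switches it off if it is on; $-$ does nothing. Initially all sources are off, the machine is in $q_0$, the head is on cell $0$, and the detector is at a prescribed initial grid position. For a given source, a maximal sequence of toggles at consecutive time steps is called non-transient if its length is odd; there is a constant $k$ such that the machine crashes if it attempts a non-transient toggle sequence on a single source for the $(k+1)$-th time. The machine accepts when it is in an accepting state with detector output $\underline0$. Its running time is the total number of moves made by the head plus the number of moves made by the detector. A 2OIA recognizes a language $L$ if it accepts every input in $L$ and rejects every input not in $L$. *)

theory Defs
  imports Complex_Main
begin

datatype ab = A | B

datatype 'a tsym = LEnd | Sym 'a | REnd

datatype hmove = HLeft | HRight | HStay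
datatype dmove = DLeft | DRight | DUp | DDown | DStay

datatype phase = Ph0 | PhPi

datatype action = Toggle phase | NoAct

fun phase_val :: "phase \<Rightarrow> real" where
  "phase_val Ph0 = 0"
| "phase_val PhPi = pi"

text \<open>A machine: states are natural numbers drawn from the finite set Q.
  lam is the common wavelength, amp the common initial amplitude A_0, and
  kmax the constant k bounding non-transient toggle sequences per source.\<close>
record 'a oia =
  Q :: "nat set"
  q0 :: nat
  Acc :: "nat set"
  Rej :: "nat set"
  delta :: "nat \<Rightarrow> 'a tsym \<Rightarrow> bool \<Rightarrow> nat \<times> hmove \<times> dmove \<times> action"
  lam :: real
  amp :: real
  kmax :: nat

definition wf_oia :: "'a oia \<Rightarrow> bool" where
  "wf_oia M \<longleftrightarrow> finite (Q M) \<and> q0 M \<in> Q M \<and> Acc M \<subseteq> Q M \<and> Rej M \<subseteq> Q M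
     \<and> Acc M \<inter> Rej M = {} \<and> lam M > 0 \<and> amp M > 0
     \<and> (\<forall>q\<in>Q M. \<forall>s b. fst (delta M q s b) \<in> Q M)"

text \<open>The detector is at the grid point (dj/2, dk/2).
  src m is the state of the source of cell m (None = off).
  runlen m = length of the current maximal run of consecutive toggles on source m
  (0 if source m was not toggled in the last step); ntcount m = number of completed
  non-transient (odd-length) toggle runs on source m; moves = number of head moves
  plus detector moves made so far.\<close>
record conf =
  st :: nat
  hpos :: nat
  dj :: nat
  dk :: nat
  src :: "nat \<Rightarrow> phase option"
  runlen :: "nat \<Rightarrow> nat"
  ntcount :: "nat \<Rightarrow> nat"
  moves :: nat

definition init_conf :: "'a oia \<Rightarrow> conf" where
  "init_conf M = \<lparr>st = q0 M, hpos = 0, dj = 0, dk = 0, src = (\<lambda>_. None),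
     runlen = (\<lambda>_. 0), ntcount = (\<lambda>_. 0), moves = 0\<rparr>"

definition sdist :: "conf \<Rightarrow> nat \<Rightarrow> real" where
  "sdist c m = sqrt ((real m - real (dj c) / 2)^2 + (real (dk c) / 2)^2)"

definition sees :: "conf \<Rightarrow> nat \<Rightarrow> bool" where
  "sees c m \<longleftrightarrow> \<bar>2 * int m - int (dj c)\<bar> \<le> int (dk c)"

definition lit :: "nat \<Rightarrow> conf \<Rightarrow> nat set" where
  "lit n c = {m. m \<le> n + 1 \<and> src c m \<noteq> None \<and> sees c m}"

definition resultant :: "'a oia \<Rightarrow> nat \<Rightarrow> conf \<Rightarrow> complex" where
  "resultant M n c = (\<Sum>m\<in>{m\<in>lit n c. sdist c m \<noteq> 0}.
      complex_of_real (amp M / sdist c m)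
      * cis (phase_val (the (src c m)) + 2 * pi * sdist c m / lam M))"

text \<open>Detector output (True = 1). A switched-on source at distance 0 has
  unbounded amplitude at the detector and is counted as detected.\<close>
definition detect :: "'a oia \<Rightarrow> nat \<Rightarrow> conf \<Rightarrow> bool" where
  "detect M n c \<longleftrightarrow> (\<exists>m\<in>lit n c. sdist c m = 0) \<or> resultant M n c \<noteq> 0"

definition tape :: "'a list \<Rightarrow> nat \<Rightarrow> 'a tsym" where
  "tape w h = (if h = 0 then LEnd else if h \<le> length w then Sym (w ! (h - 1)) else REnd)"

definition move_head :: "nat \<Rightarrow> hmove \<Rightarrow> nat \<Rightarrow> nat option" where
  "move_head n hm h = (case hm of
      HLeft \<Rightarrow> if 0 < h then Some (h - 1) else None
    | HRight \<Rightarrow> if h < n + 1 then Some (h + 1) else None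
    | HStay \<Rightarrow> Some h)"

text \<open>Detector moves by half a unit; grid coordinates range over 0..2(n+1) halves.\<close>
definition move_det :: "nat \<Rightarrow> dmove \<Rightarrow> nat \<times> nat \<Rightarrow> (nat \<times> nat) option" where
  "move_det n dm p = (case p of (j, k) \<Rightarrow> (case dm of
      DLeft \<Rightarrow> if 0 < j then Some (j - 1, k) else None
    | DRight \<Rightarrow> if j < 2 * (n + 1) then Some (j + 1, k) else None
    | DUp \<Rightarrow> if k < 2 * (n + 1) then Some (j, k + 1) else None
    | DDown \<Rightarrow> if 0 < k then Some (j, k - 1) else None
    | DStay \<Rightarrow> Some (j, k)))"

text \<open>One step; None means the machine crashes (head or detector leaves its range,
  or a (kmax+1)-th non-transient toggle sequence on some source is completed).\<close>
definition step :: "'a oia \<Rightarrow> 'a list \<Rightarrow> conf \<Rightarrow> conf option" where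
  "step M w c = (case delta M (st c) (tape w (hpos c)) (detect M (length w) c) of
     (q', hm, dm, a) \<Rightarrow>
       (let n = length w; h = hpos c;
            tog = (\<lambda>m. m = h \<and> a \<noteq> NoAct);
            src' = (case a of NoAct \<Rightarrow> src c
                     | Toggle p \<Rightarrow> (src c)(h := (if src c h = None then Some p else None)));
            nt' = (\<lambda>m. if \<not> tog m \<and> odd (runlen c m) then ntcount c m + 1 else ntcount c m);
            rl' = (\<lambda>m. if tog m then runlen c m + 1 else 0);
            mv = (if hm = HStay then 0 else 1) + (if dm = DStay then 0 else (1::nat))
        in (case (move_head n hm h, move_det n dm (dj c, dk c)) of
              (Some h', Some (j', k')) \<Rightarrow>
                 if (\<exists>m. nt' m > kmax M) then None
                 else Some \<lparr>st = q', hpos = h', dj = j', dk = k', src = src',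
                            runlen = rl', ntcount = nt', moves = moves c + mv\<rparr>
            | _ \<Rightarrow> None)))"

definition halted :: "'a oia \<Rightarrow> conf \<Rightarrow> bool" where
  "halted M c \<longleftrightarrow> st c \<in> Acc M \<union> Rej M"

primrec exec :: "'a oia \<Rightarrow> 'a list \<Rightarrow> nat \<Rightarrow> conf option" where
  "exec M w 0 = Some (init_conf M)"
| "exec M w (Suc t) = (case exec M w t of None \<Rightarrow> None
     | Some c \<Rightarrow> if halted M c then Some c else step M w c)"

text \<open>A toggle run still pending at halting time is also counted.\<close>
definition final_ok :: "'a oia \<Rightarrow> conf \<Rightarrow> bool" where
  "final_ok M c \<longleftrightarrow> (\<forall>m. odd (runlen c m) \<longrightarrow> ntcount c m + 1 \<le> kmax M)"

definition accepts :: "'a oia \<Rightarrow> 'a list \<Rightarrow> bool" where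
  "accepts M w \<longleftrightarrow> (\<exists>t c. exec M w t = Some c \<and> st c \<in> Acc M
      \<and> \<not> detect M (length w) c \<and> final_ok M c)"

definition halts :: "'a oia \<Rightarrow> 'a list \<Rightarrow> bool" where
  "halts M w \<longleftrightarrow> (\<exists>t. exec M w t = None \<or> (\<exists>c. exec M w t = Some c \<and> halted M c))"

definition recognizes :: "'a oia \<Rightarrow> 'a list set \<Rightarrow> bool" where
  "recognizes M L \<longleftrightarrow> (\<forall>w. (w \<in> L \<longrightarrow> accepts M w) \<and> (w \<notin> L \<longrightarrow> halts M w \<and> \<not> accepts M w))"

definition time_bounded :: "'a oia \<Rightarrow> (nat \<Rightarrow> real) \<Rightarrow> bool" where
  "time_bounded M T \<longleftrightarrow> (\<forall>w. halts M w \<and>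
      (\<forall>t c. exec M w t = Some c \<longrightarrow> real (moves c) \<le> T (length w)))"

definition Lsq :: "ab list set" where
  "Lsq = {replicate n A @ replicate (n^2) B | n. True}"

end

theory Submission
  imports Defs
begin

text \<open>
  The machine switches on the source of cell 0 and reads the input once, raising the detector
  half a unit for every \<open>a\<close> and shifting it right half a unit for every \<open>b\<close>, so that on
  \<open>a\<^sup>n b\<^sup>m\<close> it arrives at \<open>(m/2, n/2)\<close>. It then works in rounds: it sweeps left over the
  \<open>a\<close>'s moving the detector left half a unit per \<open>a\<close>, lowers the detector half a unit at the
  left end marker, and returns to the first \<open>b\<close>. After \<open>k\<close> rounds the detector is at
  \<open>((m - k n)/2, (n - k)/2)\<close>, and it sees source 0 iff \<open>m - k n \<le> n - k\<close>. At the first such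
  round the machine switches source 0 off, source 1 on, moves the detector right by half a unit
  and halts in its accepting state. With \<open>b = m - k n \<le> n - k\<close>, source 1 is then invisible iff
  \<open>b = 0\<close> and \<open>k = n\<close>, i.e. iff \<open>m = n\<^sup>2\<close>. If the detector would have to leave the grid before
  it ever sees source 0, the machine crashes, which is correct since then \<open>m \<noteq> n\<^sup>2\<close>. There are
  at most \<open>n + 1\<close> rounds of \<open>O(n)\<close> moves each, so the running time is even quadratic.
\<close>

definition move_count :: "hmove \<Rightarrow> dmove \<Rightarrow> nat" where
  "move_count hm dm = (if hm = HStay then 0 else 1) + (if dm = DStay then 0 else 1)"

lemma step_eq_SomeI:
  assumes "delta M (st c) (tape w (hpos c)) (detect M (length w) c) = (st c', hm, dm, a)"
    and "move_head (length w) hm (hpos c) = Some (hpos c')"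
    and "move_det (length w) dm (dj c, dk c) = Some (dj c', dk c')"
    and "src c' = (case a of NoAct \<Rightarrow> src c
           | Toggle p \<Rightarrow> (src c)(hpos c := (if src c (hpos c) = None then Some p else None)))"
    and "runlen c' = (\<lambda>m. if m = hpos c \<and> a \<noteq> NoAct then runlen c m + 1 else 0)"
    and "ntcount c' = (\<lambda>m. if \<not> (m = hpos c \<and> a \<noteq> NoAct) \<and> odd (runlen c m)
                           then ntcount c m + 1 else ntcount c m)"
    and "moves c' = moves c + move_count hm dm"
    and "\<And>m. ntcount c' m \<le> kmax M"
  shows "step M w c = Some c'"
proof -
  have "\<not> (\<exists>m. kmax M < (if \<not> (m = hpos c \<and> a \<noteq> NoAct) \<and> odd (runlen c m) then ntcount c m + 1
                          else ntcount c m))"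
    using assms(6,8) by (simp add: not_less)
  then show ?thesis
    by (simp only: step_def assms(1-3) Let_def prod.case option.case)
      (simp add: assms(4-7) move_count_def conf.equality)
qed

lemma step_quiet:
  assumes "delta M (st c) (tape w (hpos c)) (detect M (length w) c) = (st c', hm, dm, NoAct)"
    and "move_head (length w) hm (hpos c) = Some (hpos c')"
    and "move_det (length w) dm (dj c, dk c) = Some (dj c', dk c')"
    and "src c' = src c" and "runlen c' = (\<lambda>_. 0)" and "runlen c = (\<lambda>_. 0)"
    and "ntcount c' = ntcount c" and "\<And>m. ntcount c m \<le> kmax M"
    and "moves c' = moves c + move_count hm dm"
  shows "step M w c = Some c'"
  by (rule step_eq_SomeI[OF assms(1-3)]) (simp_all add: assms(4-9))

lemma step_eq_None:
  assumes "delta M (st c) (tape w (hpos c)) (detect M (length w) c) = (q', hm, dm, a)"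
    and "move_det (length w) dm (dj c, dk c) = None"
  shows "step M w c = None"
  by (simp only: step_def assms Let_def prod.case) (simp split: option.split)

lemma detect_single_source:
  assumes "amp M \<noteq> 0" and "src c = (\<lambda>_. None)(p := Some ph)" and "p \<le> n + 1"
  shows "detect M n c \<longleftrightarrow> sees c p"
proof (cases "sees c p")
  case False
  with assms(2) have "lit n c = {}" by (auto simp: lit_def)
  then show ?thesis using False by (simp add: detect_def resultant_def)
next
  case True
  with assms(2,3) have lit: "lit n c = {p}" by (auto simp: lit_def)
  show ?thesis
  proof (cases "sdist c p = 0")
    case False
    with lit have "{m \<in> lit n c. sdist c m \<noteq> 0} = {p}" by auto
    with False assms(1,2) have "resultant M n c \<noteq> 0" by (simp add: resultant_def)
    with True show ?thesis by (simp add: detect_def)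
  qed (use lit True in \<open>simp add: detect_def\<close>)
qed

lemma time_bounded_mono:
  "time_bounded M T \<Longrightarrow> (\<And>n. T n \<le> T' n) \<Longrightarrow> time_bounded M T'"
  unfolding time_bounded_def by (meson order_trans)

definition ab_word :: "nat \<Rightarrow> nat \<Rightarrow> ab list" where
  "ab_word n m = replicate n A @ replicate m B"

lemma length_ab_word [simp]: "length (ab_word n m) = n + m"
  by (simp add: ab_word_def)

lemma tape_ab_word:
  "tape (ab_word n m) h
    = (if h = 0 then LEnd else if h \<le> n then Sym A else if h \<le> n + m then Sym B else REnd)"
  by (auto simp: tape_def ab_word_def nth_append)

lemma ab_word_inject: "ab_word n m = ab_word n' m' \<longleftrightarrow> n = n' \<and> m = m'"
proof
  assume eq: "ab_word n m = ab_word n' m'"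
  then have "length (filter (\<lambda>x. x = A) (ab_word n m)) = length (filter (\<lambda>x. x = A) (ab_word n' m'))"
    by simp
  then have "n = n'" by (simp add: ab_word_def filter_replicate)
  with arg_cong[OF eq, of length] show "n = n' \<and> m = m'" by simp
qed simp

lemma in_Lsq_iff: "w \<in> Lsq \<longleftrightarrow> (\<exists>n. w = ab_word n (n * n))"
  by (auto simp: Lsq_def ab_word_def power2_eq_square)

lemma ab_word_in_Lsq_iff: "ab_word n m \<in> Lsq \<longleftrightarrow> m = n * n"
  by (auto simp: in_Lsq_iff ab_word_inject)

lemma B_first_not_in_Lsq: "w \<noteq> [] \<Longrightarrow> w ! 0 = B \<Longrightarrow> w \<notin> Lsq"
  by (auto simp: in_Lsq_iff ab_word_def nth_append split: if_splits)

lemma all_A_not_in_Lsq: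
  assumes "w \<noteq> []" and "\<forall>p < length w. w ! p = A"
  shows "w \<notin> Lsq"
proof
  assume "w \<in> Lsq"
  then obtain n where w: "w = ab_word n (n * n)" by (auto simp: in_Lsq_iff)
  with assms(1) have "n \<noteq> 0" by (auto simp: ab_word_def)
  with w have "n < length w" and "w ! n = B" by (simp_all add: ab_word_def nth_append)
  with assms(2) show False by auto
qed

lemma B_before_A_not_in_Lsq:
  assumes "p < q" and "q < length w" and "w ! p = B" and "w ! q = A"
  shows "w \<notin> Lsq"
proof
  assume "w \<in> Lsq"
  then obtain n where w: "w = ab_word n (n * n)" by (auto simp: in_Lsq_iff)
  with assms(3) have "n \<le> p" by (auto simp: ab_word_def nth_append split: if_splits)
  with assms w show False by (auto simp: ab_word_def nth_append split: if_splits)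
qed

definition sq_delta :: "nat \<Rightarrow> ab tsym \<Rightarrow> bool \<Rightarrow> nat \<times> hmove \<times> dmove \<times> action" where
  "sq_delta q s d =
    (if q = 0 then (1, HRight, DStay, Toggle Ph0)
     else if q = 1 then (case s of REnd \<Rightarrow> (9, HStay, DRight, NoAct)
                          | Sym A \<Rightarrow> (2, HRight, DUp, NoAct) | _ \<Rightarrow> (10, HStay, DStay, NoAct))
     else if q = 2 then (case s of Sym A \<Rightarrow> (2, HRight, DUp, NoAct)
                          | Sym B \<Rightarrow> (3, HRight, DRight, NoAct) | _ \<Rightarrow> (10, HStay, DStay, NoAct))
     else if q = 3 then (case s of Sym B \<Rightarrow> (3, HRight, DRight, NoAct)
                          | REnd \<Rightarrow> (4, HLeft, DStay, NoAct) | _ \<Rightarrow> (10, HStay, DStay, NoAct))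
     else if q = 4 then (case s of Sym B \<Rightarrow> (4, HLeft, DStay, NoAct)
                          | Sym A \<Rightarrow> (5, HLeft, DLeft, NoAct) | _ \<Rightarrow> (10, HStay, DStay, NoAct))
     else if q = 5 then (case s of Sym A \<Rightarrow> (5, HLeft, DLeft, NoAct)
                          | LEnd \<Rightarrow> (6, HStay, DDown, NoAct) | _ \<Rightarrow> (10, HStay, DStay, NoAct))
     else if q = 6 then (if d then (8, HRight, DStay, Toggle Ph0) else (7, HRight, DStay, NoAct))
     else if q = 7 then (case s of Sym A \<Rightarrow> (7, HRight, DStay, NoAct)
                          | Sym B \<Rightarrow> (5, HLeft, DStay, NoAct) | _ \<Rightarrow> (10, HStay, DStay, NoAct))
     else if q = 8 then (9, HStay, DRight, Toggle Ph0)
     else (10, HStay, DStay, NoAct))"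

definition sq_oia :: "ab oia" where
  "sq_oia = \<lparr>Q = {..10}, q0 = 0, Acc = {9}, Rej = {10}, delta = sq_delta,
             lam = 1, amp = 1, kmax = 2\<rparr>"

lemma sq_oia_simps [simp]:
  "Q sq_oia = {..10}" "q0 sq_oia = 0" "Acc sq_oia = {9}" "Rej sq_oia = {10}"
  "delta sq_oia = sq_delta" "lam sq_oia = 1" "amp sq_oia = 1" "kmax sq_oia = 2"
  by (simp_all add: sq_oia_def)

lemma wf_sq_oia: "wf_oia sq_oia"
  unfolding wf_oia_def by (auto simp: sq_delta_def split: tsym.split ab.split)

lemma halted_sq_oia_iff: "halted sq_oia c \<longleftrightarrow> st c = 9 \<or> st c = 10"
  by (auto simp: halted_def)

definition source_at :: "nat \<Rightarrow> nat \<Rightarrow> phase option" where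
  "source_at p = (\<lambda>_. None)(p := Some Ph0)"

definition count_at :: "nat \<Rightarrow> nat \<Rightarrow> nat \<Rightarrow> nat" where
  "count_at p k = (\<lambda>m. if m = p then k else 0)"

lemmas sq_transition_simps =
  sq_delta_def move_head_def move_det_def move_count_def count_at_def

lemma detect_source_at:
  "src c = source_at p \<Longrightarrow> p \<le> n + 1 \<Longrightarrow> detect sq_oia n c \<longleftrightarrow> sees c p"
  by (rule detect_single_source) (simp_all add: source_at_def)

definition steady :: "conf \<Rightarrow> bool" where
  "steady c \<longleftrightarrow> src c = source_at 0 \<and> runlen c = (\<lambda>_. 0) \<and> ntcount c = count_at 0 1"

lemma steady_update [simp]:
  "steady (c\<lparr>st := q\<rparr>) \<longleftrightarrow> steady c" "steady (c\<lparr>hpos := h\<rparr>) \<longleftrightarrow> steady c"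
  "steady (c\<lparr>dj := j\<rparr>) \<longleftrightarrow> steady c" "steady (c\<lparr>dk := k\<rparr>) \<longleftrightarrow> steady c"
  "steady (c\<lparr>moves := t\<rparr>) \<longleftrightarrow> steady c"
  by (simp_all add: steady_def)

lemma detect_steady: "steady c \<Longrightarrow> detect sq_oia n c \<longleftrightarrow> dj c \<le> dk c"
  by (auto simp: steady_def detect_source_at sees_def)

definition inv_started :: "conf \<Rightarrow> bool" where
  "inv_started c \<longleftrightarrow> st c = 1 \<and> hpos c = 1 \<and> dj c = 0 \<and> dk c = 0 \<and> src c = source_at 0
     \<and> runlen c = count_at 0 1 \<and> ntcount c = (\<lambda>_. 0) \<and> moves c = 1"

definition inv_reading_as :: "ab list \<Rightarrow> conf \<Rightarrow> nat \<Rightarrow> bool" where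
  "inv_reading_as w c i \<longleftrightarrow> st c = 2 \<and> 1 \<le> i \<and> i \<le> length w \<and> (\<forall>p < i. w ! p = A)
     \<and> hpos c = i + 1 \<and> dj c = 0 \<and> dk c = i \<and> steady c \<and> moves c = 1 + 2 * i"

definition inv_reading_bs :: "ab list \<Rightarrow> conf \<Rightarrow> nat \<Rightarrow> nat \<Rightarrow> bool" where
  "inv_reading_bs w c n j \<longleftrightarrow> st c = 3 \<and> 1 \<le> n \<and> 1 \<le> j \<and> n + j \<le> length w
     \<and> (\<forall>p < n. w ! p = A) \<and> (\<forall>p. n \<le> p \<longrightarrow> p < n + j \<longrightarrow> w ! p = B)
     \<and> hpos c = n + j + 1 \<and> dj c = j \<and> dk c = n \<and> steady c \<and> moves c = 1 + 2 * n + 2 * j"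

definition inv_rewinding :: "ab list \<Rightarrow> conf \<Rightarrow> nat \<Rightarrow> nat \<Rightarrow> nat \<Rightarrow> bool" where
  "inv_rewinding w c n m h \<longleftrightarrow> st c = 4 \<and> 1 \<le> n \<and> 1 \<le> m \<and> w = ab_word n m
     \<and> n \<le> h \<and> h \<le> n + m \<and> hpos c = h \<and> dj c = m \<and> dk c = n \<and> steady c
     \<and> moves c + h = 2 + 3 * (n + m)"

text \<open>
  In the invariants of the rounds, \<open>k\<close> is the number of the current round, counted from 1,
  and every completed round has cost at most \<open>4 (n + 1)\<close> moves.
\<close>

definition inv_sweeping :: "ab list \<Rightarrow> conf \<Rightarrow> nat \<Rightarrow> nat \<Rightarrow> nat \<Rightarrow> nat \<Rightarrow> bool" where
  "inv_sweeping w c n m k h \<longleftrightarrow> st c = 5 \<and> 1 \<le> n \<and> 1 \<le> m \<and> w = ab_word n m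
     \<and> 1 \<le> k \<and> k \<le> n + 1 \<and> (k \<le> n \<or> n * n < m) \<and> h \<le> n \<and> hpos c = h
     \<and> dj c + k * n = m + h \<and> dk c + k = n + 1 \<and> steady c
     \<and> moves c + 2 * h + 4 * (n + 1) \<le> 2 + 3 * (n + m) + 2 * n + k * (4 * n + 4)"

definition inv_at_left_end :: "ab list \<Rightarrow> conf \<Rightarrow> nat \<Rightarrow> nat \<Rightarrow> nat \<Rightarrow> bool" where
  "inv_at_left_end w c n m k \<longleftrightarrow> st c = 6 \<and> 1 \<le> n \<and> 1 \<le> m \<and> w = ab_word n m
     \<and> 1 \<le> k \<and> k \<le> n \<and> hpos c = 0 \<and> dj c + k * n = m \<and> dk c + k = n \<and> steady c
     \<and> moves c + 4 * (n + 1) \<le> 3 + 3 * (n + m) + 2 * n + k * (4 * n + 4)"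

definition inv_returning :: "ab list \<Rightarrow> conf \<Rightarrow> nat \<Rightarrow> nat \<Rightarrow> nat \<Rightarrow> nat \<Rightarrow> bool" where
  "inv_returning w c n m k h \<longleftrightarrow> st c = 7 \<and> 1 \<le> n \<and> 1 \<le> m \<and> w = ab_word n m
     \<and> 1 \<le> k \<and> k \<le> n \<and> 1 \<le> h \<and> h \<le> n + 1 \<and> hpos c = h
     \<and> dj c + k * n = m \<and> dk c + k = n \<and> dk c < dj c \<and> steady c
     \<and> moves c + 4 * (n + 1) \<le> 3 + 3 * (n + m) + 2 * n + k * (4 * n + 4) + h"

definition inv_probing :: "ab list \<Rightarrow> conf \<Rightarrow> nat \<Rightarrow> nat \<Rightarrow> nat \<Rightarrow> bool" where
  "inv_probing w c n m k \<longleftrightarrow> st c = 8 \<and> 1 \<le> n \<and> 1 \<le> m \<and> w = ab_word n m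
     \<and> 1 \<le> k \<and> k \<le> n \<and> hpos c = 1 \<and> dj c + k * n = m \<and> dk c + k = n \<and> dj c \<le> dk c
     \<and> src c = (\<lambda>_. None) \<and> runlen c = count_at 0 1 \<and> ntcount c = count_at 0 1
     \<and> moves c + 4 * (n + 1) \<le> 4 + 3 * (n + m) + 2 * n + k * (4 * n + 4)"

definition inv_final_empty :: "ab list \<Rightarrow> conf \<Rightarrow> bool" where
  "inv_final_empty w c \<longleftrightarrow> st c = 9 \<and> w = [] \<and> dj c = 1 \<and> dk c = 0 \<and> steady c \<and> moves c = 2"

definition inv_final :: "ab list \<Rightarrow> conf \<Rightarrow> nat \<Rightarrow> nat \<Rightarrow> nat \<Rightarrow> nat \<Rightarrow> bool" where
  "inv_final w c n m k b \<longleftrightarrow> st c = 9 \<and> 1 \<le> n \<and> 1 \<le> m \<and> w = ab_word n m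
     \<and> 1 \<le> k \<and> k \<le> n \<and> dj c = b + 1 \<and> b + k * n = m \<and> dk c + k = n \<and> b \<le> dk c
     \<and> src c = source_at 1 \<and> runlen c = count_at 1 1 \<and> ntcount c = count_at 0 2
     \<and> moves c + 4 * (n + 1) \<le> 5 + 3 * (n + m) + 2 * n + k * (4 * n + 4)"

definition inv_rejected :: "ab list \<Rightarrow> conf \<Rightarrow> bool" where
  "inv_rejected w c \<longleftrightarrow> st c = 10 \<and> w \<notin> Lsq \<and> moves c \<le> 1 + 2 * length w"

definition sq_inv :: "ab list \<Rightarrow> conf \<Rightarrow> bool" where
  "sq_inv w c \<longleftrightarrow> c = init_conf sq_oia \<or> inv_started c \<or> (\<exists>i. inv_reading_as w c i)
     \<or> (\<exists>n j. inv_reading_bs w c n j) \<or> (\<exists>n m h. inv_rewinding w c n m h)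
     \<or> (\<exists>n m k h. inv_sweeping w c n m k h) \<or> (\<exists>n m k. inv_at_left_end w c n m k)
     \<or> (\<exists>n m k h. inv_returning w c n m k h) \<or> (\<exists>n m k. inv_probing w c n m k)
     \<or> inv_final_empty w c \<or> (\<exists>n m k b. inv_final w c n m k b) \<or> inv_rejected w c"

lemma
  shows sq_inv_started: "inv_started c \<Longrightarrow> sq_inv w c"
    and sq_inv_reading_as: "inv_reading_as w c i \<Longrightarrow> sq_inv w c"
    and sq_inv_reading_bs: "inv_reading_bs w c n j \<Longrightarrow> sq_inv w c"
    and sq_inv_rewinding: "inv_rewinding w c n m h \<Longrightarrow> sq_inv w c"
    and sq_inv_sweeping: "inv_sweeping w c n m k h \<Longrightarrow> sq_inv w c"
    and sq_inv_at_left_end: "inv_at_left_end w c n m k \<Longrightarrow> sq_inv w c"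
    and sq_inv_returning: "inv_returning w c n m k h \<Longrightarrow> sq_inv w c"
    and sq_inv_probing: "inv_probing w c n m k \<Longrightarrow> sq_inv w c"
    and sq_inv_final_empty: "inv_final_empty w c \<Longrightarrow> sq_inv w c"
    and sq_inv_final: "inv_final w c n m k b \<Longrightarrow> sq_inv w c"
    and sq_inv_rejected: "inv_rejected w c \<Longrightarrow> sq_inv w c"
  unfolding sq_inv_def by auto

definition sq_step_ok :: "ab list \<Rightarrow> conf \<Rightarrow> bool" where
  "sq_step_ok w c \<longleftrightarrow> (case step sq_oia w c of
       None \<Rightarrow> w \<notin> Lsq
     | Some c' \<Rightarrow> sq_inv w c' \<and> (halted sq_oia c' \<or> moves c < moves c'))"

lemma sq_step_okI:
  "step sq_oia w c = Some c' \<Longrightarrow> sq_inv w c' \<Longrightarrow> halted sq_oia c' \<or> moves c < moves c'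
    \<Longrightarrow> sq_step_ok w c"
  by (simp add: sq_step_ok_def)

lemma sq_step_ok_crashI: "step sq_oia w c = None \<Longrightarrow> w \<notin> Lsq \<Longrightarrow> sq_step_ok w c"
  by (simp add: sq_step_ok_def)

lemma sq_step_ok_init: "sq_step_ok w (init_conf sq_oia)"
proof -
  have "step sq_oia w (init_conf sq_oia) = Some \<lparr>st = 1, hpos = 1, dj = 0, dk = 0,
      src = source_at 0, runlen = count_at 0 1, ntcount = (\<lambda>_. 0), moves = 1\<rparr>"
      (is "_ = Some ?c'")
    by (rule step_eq_SomeI[where hm = HRight and dm = DStay and a = "Toggle Ph0"])
      (auto simp: sq_transition_simps init_conf_def tape_def source_at_def)
  moreover have "inv_started ?c'" by (simp add: inv_started_def)
  ultimately show ?thesis by (auto intro: sq_step_okI sq_inv_started simp: init_conf_def)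
qed

lemma sq_step_ok_started:
  assumes "inv_started c"
  shows "sq_step_ok w c"
proof -
  note c = assms[unfolded inv_started_def]
  consider (empty) "w = []" | (A) "w \<noteq> []" "w ! 0 = A" | (B) "w \<noteq> []" "w ! 0 = B"
    by (metis ab.exhaust)
  then show ?thesis
  proof cases
    case empty
    have "step sq_oia w c
        = Some (c\<lparr>st := 9, dj := 1, runlen := (\<lambda>_. 0), ntcount := count_at 0 1, moves := 2\<rparr>)"
        (is "_ = Some ?c'")
      by (rule step_eq_SomeI[where hm = HStay and dm = DRight and a = NoAct])
        (use c empty in \<open>auto simp: sq_transition_simps tape_def\<close>)
    moreover have "inv_final_empty w ?c'"
      using c empty by (simp add: inv_final_empty_def steady_def)
    ultimately show ?thesis
      by (auto intro: sq_step_okI sq_inv_final_empty simp: halted_sq_oia_iff)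
  next
    case A
    have "step sq_oia w c = Some (c\<lparr>st := 2, hpos := 2, dk := 1, runlen := (\<lambda>_. 0),
        ntcount := count_at 0 1, moves := 3\<rparr>)"
        (is "_ = Some ?c'")
      by (rule step_eq_SomeI[where hm = HRight and dm = DUp and a = NoAct])
        (use c A in \<open>auto simp: sq_transition_simps tape_def Suc_le_eq\<close>)
    moreover have "inv_reading_as w ?c' 1"
      using c A by (auto simp: inv_reading_as_def steady_def Suc_le_eq)
    ultimately show ?thesis
      using c by (auto intro: sq_step_okI sq_inv_reading_as)
  next
    case B
    have "step sq_oia w c = Some (c\<lparr>st := 10, runlen := (\<lambda>_. 0), ntcount := count_at 0 1\<rparr>)"
        (is "_ = Some ?c'")
      by (rule step_eq_SomeI[where hm = HStay and dm = DStay and a = NoAct])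
        (use c B in \<open>auto simp: sq_transition_simps tape_def Suc_le_eq\<close>)
    moreover have "inv_rejected w ?c'"
      using c B B_first_not_in_Lsq by (simp add: inv_rejected_def)
    ultimately show ?thesis
      by (auto intro: sq_step_okI sq_inv_rejected simp: halted_sq_oia_iff)
  qed
qed

lemma sq_step_ok_reading_as:
  assumes "inv_reading_as w c i"
  shows "sq_step_ok w c"
proof -
  note c = assms[unfolded inv_reading_as_def]
  consider (finished) "i = length w" | (A) "i < length w" "w ! i = A" | (B) "i < length w" "w ! i = B"
    using c by (metis ab.exhaust le_neq_implies_less)
  then show ?thesis
  proof cases
    case finished
    have "step sq_oia w c = Some (c\<lparr>st := 10\<rparr>)" (is "_ = Some ?c'")
      by (rule step_quiet[where hm = HStay and dm = DStay])
        (use c finished in \<open>auto simp: sq_transition_simps steady_def tape_def\<close>)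
    moreover have "w \<notin> Lsq"
      using c finished by (intro all_A_not_in_Lsq) auto
    then have "inv_rejected w ?c'"
      using c by (simp add: inv_rejected_def)
    ultimately show ?thesis
      by (auto intro: sq_step_okI sq_inv_rejected simp: halted_sq_oia_iff)
  next
    case A
    have "step sq_oia w c = Some (c\<lparr>st := 2, hpos := i + 2, dk := i + 1, moves := moves c + 2\<rparr>)"
        (is "_ = Some ?c'")
      by (rule step_quiet[where hm = HRight and dm = DUp])
        (use c A in \<open>auto simp: sq_transition_simps steady_def tape_def\<close>)
    moreover have "inv_reading_as w ?c' (i + 1)"
      using c A by (auto simp: inv_reading_as_def less_Suc_eq)
    ultimately show ?thesis
      by (auto intro: sq_step_okI sq_inv_reading_as)
  next
    case B
    have "step sq_oia w c = Some (c\<lparr>st := 3, hpos := i + 2, dj := 1, moves := moves c + 2\<rparr>)"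
        (is "_ = Some ?c'")
      by (rule step_quiet[where hm = HRight and dm = DRight])
        (use c B in \<open>auto simp: sq_transition_simps steady_def tape_def\<close>)
    moreover have "inv_reading_bs w ?c' i 1"
      using c B by (auto simp: inv_reading_bs_def le_less_Suc_eq)
    ultimately show ?thesis
      by (auto intro: sq_step_okI sq_inv_reading_bs)
  qed
qed

lemma sq_step_ok_reading_bs:
  assumes "inv_reading_bs w c n j"
  shows "sq_step_ok w c"
proof -
  note c = assms[unfolded inv_reading_bs_def]
  consider (finished) "n + j = length w" | (A) "n + j < length w" "w ! (n + j) = A"
    | (B) "n + j < length w" "w ! (n + j) = B"
    using c by (metis ab.exhaust le_neq_implies_less)
  then show ?thesis
  proof cases
    case finished
    have w: "w = ab_word n j"
      by (rule nth_equalityI) (use c finished in \<open>auto simp: ab_word_def nth_append\<close>)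
    have "step sq_oia w c = Some (c\<lparr>st := 4, hpos := n + j, moves := moves c + 1\<rparr>)"
        (is "_ = Some ?c'")
      by (rule step_quiet[where hm = HLeft and dm = DStay])
        (use c finished in \<open>auto simp: sq_transition_simps steady_def tape_def\<close>)
    moreover have "inv_rewinding w ?c' n j (n + j)"
      using c w by (auto simp: inv_rewinding_def)
    ultimately show ?thesis
      by (auto intro: sq_step_okI sq_inv_rewinding)
  next
    case A
    have "step sq_oia w c = Some (c\<lparr>st := 10\<rparr>)" (is "_ = Some ?c'")
      by (rule step_quiet[where hm = HStay and dm = DStay])
        (use c A in \<open>auto simp: sq_transition_simps steady_def tape_def\<close>)
    moreover have "w \<notin> Lsq"
      using c A by (intro B_before_A_not_in_Lsq[where p = n and q = "n + j"]) auto
    then have "inv_rejected w ?c'"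
      using c by (simp add: inv_rejected_def)
    ultimately show ?thesis
      by (auto intro: sq_step_okI sq_inv_rejected simp: halted_sq_oia_iff)
  next
    case B
    have "step sq_oia w c
        = Some (c\<lparr>st := 3, hpos := n + j + 2, dj := j + 1, moves := moves c + 2\<rparr>)"
        (is "_ = Some ?c'")
      by (rule step_quiet[where hm = HRight and dm = DRight])
        (use c B in \<open>auto simp: sq_transition_simps steady_def tape_def\<close>)
    moreover have "inv_reading_bs w ?c' n (j + 1)"
      using c B by (auto simp: inv_reading_bs_def less_Suc_eq)
    ultimately show ?thesis
      by (auto intro: sq_step_okI sq_inv_reading_bs)
  qed
qed

lemma sq_step_ok_rewinding:
  assumes "inv_rewinding w c n m h"
  shows "sq_step_ok w c"
proof -
  note c = assms[unfolded inv_rewinding_def]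
  show ?thesis
  proof (cases "h = n")
    case True
    have "step sq_oia w c
        = Some (c\<lparr>st := 5, hpos := n - 1, dj := m - 1, moves := moves c + 2\<rparr>)"
        (is "_ = Some ?c'")
      by (rule step_quiet[where hm = HLeft and dm = DLeft])
        (use c True in \<open>auto simp: sq_transition_simps steady_def tape_ab_word\<close>)
    moreover have "inv_sweeping w ?c' n m 1 (n - 1)"
      using c True by (auto simp: inv_sweeping_def)
    ultimately show ?thesis
      by (auto intro: sq_step_okI sq_inv_sweeping)
  next
    case False
    have "step sq_oia w c = Some (c\<lparr>st := 4, hpos := h - 1, moves := moves c + 1\<rparr>)"
        (is "_ = Some ?c'")
      by (rule step_quiet[where hm = HLeft and dm = DStay])
        (use c False in \<open>auto simp: sq_transition_simps steady_def tape_ab_word\<close>)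
    moreover have "inv_rewinding w ?c' n m (h - 1)"
      using c False by (auto simp: inv_rewinding_def)
    ultimately show ?thesis
      by (auto intro: sq_step_okI sq_inv_rewinding)
  qed
qed

lemma sq_step_ok_sweeping:
  assumes "inv_sweeping w c n m k h"
  shows "sq_step_ok w c"
proof -
  note c = assms[unfolded inv_sweeping_def]
  consider (fall) "h \<noteq> 0" "dj c = 0" | (sweep) "h \<noteq> 0" "dj c \<noteq> 0"
    | (bottom) "h = 0" "dk c = 0" | (lower) "h = 0" "dk c \<noteq> 0"
    by blast
  then show ?thesis
  proof cases
    case fall
    have "m \<noteq> n * n"
    proof
      assume "m = n * n"
      with c have "k * n \<le> m" by auto
      with c fall show False by linarith
    qed
    with c have "w \<notin> Lsq" by (simp add: ab_word_in_Lsq_iff)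
    moreover have "step sq_oia w c = None"
      by (rule step_eq_None[where hm = HLeft and dm = DLeft and a = NoAct])
        (use c fall in \<open>auto simp: sq_transition_simps tape_ab_word\<close>)
    ultimately show ?thesis by (rule sq_step_ok_crashI[rotated])
  next
    case sweep
    have "step sq_oia w c
        = Some (c\<lparr>st := 5, hpos := h - 1, dj := dj c - 1, moves := moves c + 2\<rparr>)"
        (is "_ = Some ?c'")
      by (rule step_quiet[where hm = HLeft and dm = DLeft])
        (use c sweep in \<open>auto simp: sq_transition_simps steady_def tape_ab_word\<close>)
    moreover have "inv_sweeping w ?c' n m k (h - 1)"
      using c sweep by (auto simp: inv_sweeping_def)
    ultimately show ?thesis
      by (auto intro: sq_step_okI sq_inv_sweeping)
  next
    case bottom
    with c have "w \<notin> Lsq" by (auto simp: ab_word_in_Lsq_iff)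
    moreover have "step sq_oia w c = None"
      by (rule step_eq_None[where hm = HStay and dm = DDown and a = NoAct])
        (use c bottom in \<open>auto simp: sq_transition_simps tape_ab_word\<close>)
    ultimately show ?thesis by (rule sq_step_ok_crashI[rotated])
  next
    case lower
    have "step sq_oia w c = Some (c\<lparr>st := 6, dk := dk c - 1, moves := moves c + 1\<rparr>)"
        (is "_ = Some ?c'")
      by (rule step_quiet[where hm = HStay and dm = DDown])
        (use c lower in \<open>auto simp: sq_transition_simps steady_def tape_ab_word\<close>)
    moreover have "inv_at_left_end w ?c' n m k"
      using c lower by (auto simp: inv_at_left_end_def)
    ultimately show ?thesis
      by (auto intro: sq_step_okI sq_inv_at_left_end)
  qed
qed

lemma sq_step_ok_at_left_end:
  assumes "inv_at_left_end w c n m k"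
  shows "sq_step_ok w c"
proof -
  note c = assms[unfolded inv_at_left_end_def]
  show ?thesis
  proof (cases "dj c \<le> dk c")
    case True
    have "step sq_oia w c = Some (c\<lparr>st := 8, hpos := 1, src := (\<lambda>_. None),
        runlen := count_at 0 1, moves := moves c + 1\<rparr>)"
        (is "_ = Some ?c'")
      by (rule step_eq_SomeI[where hm = HRight and dm = DStay and a = "Toggle Ph0"])
        (use c True in \<open>auto simp: sq_transition_simps detect_steady steady_def source_at_def
        tape_ab_word\<close>)
    moreover have "inv_probing w ?c' n m k"
      using c True by (auto simp: inv_probing_def steady_def)
    ultimately show ?thesis
      by (auto intro: sq_step_okI sq_inv_probing)
  next
    case False
    have "step sq_oia w c = Some (c\<lparr>st := 7, hpos := 1, moves := moves c + 1\<rparr>)"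
        (is "_ = Some ?c'")
      by (rule step_quiet[where hm = HRight and dm = DStay])
        (use c False in \<open>auto simp: sq_transition_simps detect_steady steady_def tape_ab_word\<close>)
    moreover have "inv_returning w ?c' n m k 1"
      using c False by (auto simp: inv_returning_def)
    ultimately show ?thesis
      by (auto intro: sq_step_okI sq_inv_returning)
  qed
qed

lemma sq_step_ok_returning:
  assumes "inv_returning w c n m k h"
  shows "sq_step_ok w c"
proof -
  note c = assms[unfolded inv_returning_def]
  show ?thesis
  proof (cases "h \<le> n")
    case True
    have "step sq_oia w c = Some (c\<lparr>st := 7, hpos := h + 1, moves := moves c + 1\<rparr>)"
        (is "_ = Some ?c'")
      by (rule step_quiet[where hm = HRight and dm = DStay])
        (use c True in \<open>auto simp: sq_transition_simps steady_def tape_ab_word\<close>)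
    moreover have "inv_returning w ?c' n m k (h + 1)"
      using c True by (auto simp: inv_returning_def)
    ultimately show ?thesis
      by (auto intro: sq_step_okI sq_inv_returning)
  next
    case False
    have "k + 1 \<le> n \<or> n * n < m"
      using c by (cases "k = n") auto
    moreover have "step sq_oia w c = Some (c\<lparr>st := 5, hpos := n, moves := moves c + 1\<rparr>)"
        (is "_ = Some ?c'")
      by (rule step_quiet[where hm = HLeft and dm = DStay])
        (use c False in \<open>auto simp: sq_transition_simps steady_def tape_ab_word\<close>)
    ultimately have "inv_sweeping w ?c' n m (k + 1) n"
      using c False by (auto simp: inv_sweeping_def)
    with \<open>step sq_oia w c = Some ?c'\<close> show ?thesis
      by (auto intro: sq_step_okI sq_inv_sweeping)
  qed
qed

lemma sq_step_ok_probing: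
  assumes "inv_probing w c n m k"
  shows "sq_step_ok w c"
proof -
  note c = assms[unfolded inv_probing_def]
  have "step sq_oia w c = Some (c\<lparr>st := 9, dj := dj c + 1, src := source_at 1,
      runlen := count_at 1 1, ntcount := count_at 0 2, moves := moves c + 1\<rparr>)"
      (is "_ = Some ?c'")
    by (rule step_eq_SomeI[where hm = HStay and dm = DRight and a = "Toggle Ph0"])
      (use c in \<open>auto simp: sq_transition_simps source_at_def\<close>)
  moreover have "inv_final w ?c' n m k (dj c)"
    using c by (auto simp: inv_final_def)
  ultimately show ?thesis
    by (auto intro: sq_step_okI sq_inv_final simp: halted_sq_oia_iff)
qed

lemma sq_step_ok_of_sq_inv:
  assumes "sq_inv w c" and "\<not> halted sq_oia c"
  shows "sq_step_ok w c"
  using assms(1) unfolding sq_inv_def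
proof (elim disjE exE)
  assume "inv_final_empty w c"
  with assms(2) show ?thesis by (simp add: inv_final_empty_def halted_sq_oia_iff)
next
  fix n m k b assume "inv_final w c n m k b"
  with assms(2) show ?thesis by (simp add: inv_final_def halted_sq_oia_iff)
next
  assume "inv_rejected w c"
  with assms(2) show ?thesis by (simp add: inv_rejected_def halted_sq_oia_iff)
qed (auto intro: sq_step_ok_init sq_step_ok_started sq_step_ok_reading_as sq_step_ok_reading_bs
  sq_step_ok_rewinding sq_step_ok_sweeping sq_step_ok_at_left_end sq_step_ok_returning
  sq_step_ok_probing)

lemma exec_sq_oia:
  "case exec sq_oia w t of
     None \<Rightarrow> w \<notin> Lsq
   | Some c \<Rightarrow> sq_inv w c \<and> (halted sq_oia c \<or> t \<le> moves c)"
proof (induction t)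
  case 0
  show ?case by (simp add: sq_inv_def)
next
  case (Suc t)
  show ?case
  proof (cases "exec sq_oia w t")
    case (Some c)
    with Suc.IH have "sq_inv w c" and "halted sq_oia c \<or> t \<le> moves c" by auto
    moreover have "sq_step_ok w c" if "\<not> halted sq_oia c"
      using sq_step_ok_of_sq_inv \<open>sq_inv w c\<close> that by blast
    ultimately show ?thesis
      using Some by (auto simp: sq_step_ok_def split: option.splits)
  qed (use Suc.IH in simp)
qed

lemma moves_le_of_sq_inv:
  assumes "sq_inv w c"
  shows "moves c \<le> 9 * (length w + 1)\<^sup>2"
proof -
  let ?N = "length w"
  have rounds: "k * (4 * n + 4) \<le> 4 * (?N + 1)\<^sup>2" if "k \<le> n + 1" and "n \<le> ?N" for k n
  proof -
    have "k * (4 * n + 4) \<le> (?N + 1) * (4 * ?N + 4)"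
      using that by (intro mult_le_mono) auto
    then show ?thesis by (simp add: power2_eq_square algebra_simps)
  qed
  have "moves c \<le> 5 * (?N + 1) + 4 * (?N + 1)\<^sup>2"
    using assms unfolding sq_inv_def
  proof (elim disjE exE)
    fix n m k h assume "inv_sweeping w c n m k h"
    with rounds[of k n] show ?thesis by (auto simp: inv_sweeping_def)
  next
    fix n m k assume "inv_at_left_end w c n m k"
    with rounds[of k n] show ?thesis by (auto simp: inv_at_left_end_def)
  next
    fix n m k h assume "inv_returning w c n m k h"
    with rounds[of k n] show ?thesis by (auto simp: inv_returning_def)
  next
    fix n m k assume "inv_probing w c n m k"
    with rounds[of k n] show ?thesis by (auto simp: inv_probing_def)
  next
    fix n m k b assume "inv_final w c n m k b"
    with rounds[of k n] show ?thesis by (auto simp: inv_final_def)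
  qed (auto simp: init_conf_def inv_started_def inv_reading_as_def inv_reading_bs_def
    inv_rewinding_def inv_final_empty_def inv_rejected_def)
  also have "\<dots> \<le> 9 * (?N + 1)\<^sup>2"
    by (simp add: power2_eq_square)
  finally show ?thesis .
qed

lemma sq_inv_halted:
  assumes "sq_inv w c" and "halted sq_oia c"
  shows "inv_final_empty w c \<or> (\<exists>n m k b. inv_final w c n m k b) \<or> inv_rejected w c"
proof -
  have "st c \<in> {9, 10}" using assms(2) by (simp add: halted_sq_oia_iff)
  with assms(1) show ?thesis unfolding sq_inv_def
    by (elim disjE exE) (simp_all add: init_conf_def inv_started_def inv_reading_as_def
      inv_reading_bs_def inv_rewinding_def inv_sweeping_def inv_at_left_end_def
      inv_returning_def inv_probing_def, blast+)
qed

lemma rounds_exact_of_square: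
  fixes b d k n :: nat
  assumes "b + k * n = n * n" and "d + k = n" and "0 < k" and "b \<le> d"
  shows "d = 0"
proof (rule ccontr)
  assume "d \<noteq> 0"
  have "n * n = d * n + k * n" using assms(2) by (metis add_mult_distrib)
  with assms(1) have "b = d * n" by linarith
  moreover from \<open>d \<noteq> 0\<close> assms(2,3) have "d * 2 \<le> d * n" by simp
  ultimately show False using \<open>d \<noteq> 0\<close> assms(4) by linarith
qed

lemma detect_final:
  assumes "inv_final w c n m k b"
  shows "detect sq_oia (length w) c \<longleftrightarrow> b \<noteq> 0 \<or> dk c \<noteq> 0"
  using assms by (auto simp: inv_final_def detect_source_at sees_def)

lemma in_Lsq_iff_final:
  assumes "inv_final w c n m k b"
  shows "w \<in> Lsq \<longleftrightarrow> b = 0 \<and> dk c = 0"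
proof
  assume "w \<in> Lsq"
  with assms have "b + k * n = n * n" by (simp add: inv_final_def ab_word_in_Lsq_iff)
  with assms have "dk c = 0" by (intro rounds_exact_of_square[where b = b and k = k and n = n])
    (auto simp: inv_final_def)
  with assms show "b = 0 \<and> dk c = 0" by (simp add: inv_final_def)
next
  assume "b = 0 \<and> dk c = 0"
  with assms show "w \<in> Lsq" by (auto simp: inv_final_def ab_word_in_Lsq_iff)
qed

lemma sq_inv_halted_accepting_iff:
  assumes "sq_inv w c" and "halted sq_oia c"
  shows "st c \<in> Acc sq_oia \<and> \<not> detect sq_oia (length w) c \<longleftrightarrow> w \<in> Lsq"
  using sq_inv_halted[OF assms]
proof (elim disjE exE)
  assume "inv_final_empty w c"
  then show ?thesis by (auto simp: inv_final_empty_def detect_steady in_Lsq_iff ab_word_def)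
next
  fix n m k b assume final: "inv_final w c n m k b"
  then have "st c \<in> Acc sq_oia" by (simp add: inv_final_def)
  with detect_final[OF final] in_Lsq_iff_final[OF final] show ?thesis by auto
qed (auto simp: inv_rejected_def)

lemma final_ok_sq_inv:
  assumes "sq_inv w c" and "st c = 9"
  shows "final_ok sq_oia c"
  using sq_inv_halted[OF assms(1)] assms(2)
  by (auto simp: halted_sq_oia_iff final_ok_def inv_final_empty_def steady_def inv_final_def
    inv_rejected_def count_at_def split: if_splits)

lemma exec_sq_oia_halted:
  obtains "exec sq_oia w (9 * (length w + 1)\<^sup>2 + 1) = None" and "w \<notin> Lsq"
  | c where "exec sq_oia w (9 * (length w + 1)\<^sup>2 + 1) = Some c" and "halted sq_oia c"
      and "sq_inv w c"
proof (cases "exec sq_oia w (9 * (length w + 1)\<^sup>2 + 1)")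
  case None
  with exec_sq_oia[of w "9 * (length w + 1)\<^sup>2 + 1"] that(1) show ?thesis by simp
next
  case (Some c)
  with exec_sq_oia[of w "9 * (length w + 1)\<^sup>2 + 1"]
  have "sq_inv w c" and "halted sq_oia c \<or> 9 * (length w + 1)\<^sup>2 + 1 \<le> moves c" by auto
  with moves_le_of_sq_inv[of w c] have "halted sq_oia c" by linarith
  with Some \<open>sq_inv w c\<close> that(2) show ?thesis by blast
qed

lemma halts_sq_oia: "halts sq_oia w"
proof (cases rule: exec_sq_oia_halted[of w])
  case 1
  then show ?thesis unfolding halts_def by blast
next
  case (2 c)
  then show ?thesis unfolding halts_def by blast
qed

lemma accepts_sq_oia_iff: "accepts sq_oia w \<longleftrightarrow> w \<in> Lsq"
proof
  assume "accepts sq_oia w"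
  then obtain t c where "exec sq_oia w t = Some c" and "st c \<in> Acc sq_oia"
    and "\<not> detect sq_oia (length w) c"
    unfolding accepts_def by blast
  moreover from this(1) have "sq_inv w c" using exec_sq_oia[of w t] by simp
  ultimately show "w \<in> Lsq"
    using sq_inv_halted_accepting_iff[of w c] by (auto simp: halted_sq_oia_iff)
next
  assume "w \<in> Lsq"
  then show "accepts sq_oia w"
  proof (cases rule: exec_sq_oia_halted[of w])
    case (2 c)
    with \<open>w \<in> Lsq\<close> have "st c \<in> Acc sq_oia" and "\<not> detect sq_oia (length w) c"
      using sq_inv_halted_accepting_iff[of w c] by auto
    moreover from this(1) have "final_ok sq_oia c"
      using final_ok_sq_inv[of w c] \<open>sq_inv w c\<close> by simp
    ultimately show ?thesis
      unfolding accepts_def using \<open>exec sq_oia w _ = Some c\<close> by blast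
  qed simp
qed

lemma time_bounded_sq_oia: "time_bounded sq_oia (\<lambda>n. 9 * (real n + 1)\<^sup>2)"
  unfolding time_bounded_def
proof (intro allI conjI impI)
  fix w t c
  assume "exec sq_oia w t = Some c"
  then have "moves c \<le> 9 * (length w + 1)\<^sup>2"
    using exec_sq_oia[of w t] moves_le_of_sq_inv by simp
  then have "real (moves c) \<le> real (9 * (length w + 1)\<^sup>2)"
    by (rule of_nat_mono)
  then show "real (moves c) \<le> 9 * (real (length w) + 1)\<^sup>2"
    by (simp add: add.commute)
qed (rule halts_sq_oia)

theorem theorem6:
  shows "\<exists>M :: ab oia. wf_oia M \<and> recognizes M Lsq
           \<and> (\<exists>C::real. time_bounded M (\<lambda>n. C * (real n + 1) ^ 3))"
proof (intro exI[of _ sq_oia] exI[of _ 9] conjI)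
  show "wf_oia sq_oia" by (rule wf_sq_oia)
  show "recognizes sq_oia Lsq"
    by (simp add: recognizes_def accepts_sq_oia_iff halts_sq_oia)
  show "time_bounded sq_oia (\<lambda>n. 9 * (real n + 1) ^ 3)"
    by (rule time_bounded_mono[OF time_bounded_sq_oia])
      (simp add: power_increasing[of 2 3 "real _ + 1", simplified])
qed

end
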